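(* Let $(\mathbb X,S)$ be the subshift generated by a primitive substitution $\vartheta$ on a finite alphabet $\mathcal A$, let $(\mathbb X',S')$ be a $p$-periodic subshift over a finite alphabet, let $T=S\times S'$ on $\mathbb X\times\mathbb X'$, let $\rho$ be a $T$-ergodic Borel probability measure on $\mathbb X\times\mathbb X'$, and let $f:\mathbb X\times\mathbb X'\to\mathbb R$ be locally constant, i.e. $f(x,x')=g(x_n\cdots x_{n+k-1},x')$ for some $n\in\mathbb Z$, $k\in\mathbb N$, $g$. Assume there is a word $u\in\mathcal L(\mathbb X)$ with $\operatorname{ind}(u)>3$ such that $p$ divides $|\vartheta^n(u)|$ for infinitely many $n$. Then for $\rho$-almost every $\omega\in\mathbb X\times\mathbb X'$, the operator $H_\omega=\Delta+V_\omega$, $V_\omega(j)=f(T^j\omega)$, has no eigenvalues.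
   Context: $\Delta$ is the discrete Laplacian $(\Delta\psi)(n)=\psi(n+1)+\psi(n-1)$. The subshift of a substitution $\vartheta:\mathcal A\to\mathcal A^+$ is $\mathbb X_\vartheta=\{x\in\mathcal A^{\mathbb Z}:$ every finite subword of $x$ is a subword of some $\vartheta^m(a)$, $m\in\mathbb N$, $a\in\mathcal A\}$; $\vartheta$ is primitive if some power $\vartheta^N$ maps every letter to a word containing every letter. A $p$-periodic subshift is the set of translates of one $p$-periodic sequence. $\mathcal L(\mathbb X)$ is the set of finite words occurring in $\mathbb X$. For a word $u$ and $r=n+\ell/|u|$ with $n\in\mathbb Z_+$, $0\le\ell<|u|$, $u^r=u^nu_1\cdots u_\ell$; $\operatorname{ind}(u)=\sup\{r\in\frac1{|u|}\mathbb Z_+:u^r\in\mathcal L(\mathbb X)\}$. *)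

theory Defs
  imports "HOL-Probability.Probability" "HOL-Library.Sublist"
begin

definition subst_word :: "('a \<Rightarrow> 'a list) \<Rightarrow> 'a list \<Rightarrow> 'a list" where
  "subst_word \<theta> w = concat (map \<theta> w)"

definition subst_pow :: "('a \<Rightarrow> 'a list) \<Rightarrow> nat \<Rightarrow> 'a list \<Rightarrow> 'a list" where
  "subst_pow \<theta> m = (subst_word \<theta> ^^ m)"

definition is_substitution :: "('a \<Rightarrow> 'a list) \<Rightarrow> bool" where
  "is_substitution \<theta> \<longleftrightarrow> (\<forall>a. \<theta> a \<noteq> [])"

definition primitive_subst :: "('a \<Rightarrow> 'a list) \<Rightarrow> bool" where
  "primitive_subst \<theta> \<longleftrightarrow> (\<exists>N>0. \<forall>a b. b \<in> set (subst_pow \<theta> N [a]))"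

(* the finite window x_i ... x_j (empty if j < i) *)
definition window :: "(int \<Rightarrow> 'a) \<Rightarrow> int \<Rightarrow> int \<Rightarrow> 'a list" where
  "window x i j = map x [i..j]"

definition subst_subshift :: "('a \<Rightarrow> 'a list) \<Rightarrow> (int \<Rightarrow> 'a) set" where
  "subst_subshift \<theta> = {x. \<forall>i j. \<exists>m a. sublist (window x i j) (subst_pow \<theta> m [a])}"

definition shiftZ :: "int \<Rightarrow> (int \<Rightarrow> 'a) \<Rightarrow> (int \<Rightarrow> 'a)" where
  "shiftZ j x = (\<lambda>n. x (n + j))"

definition periodic_subshift :: "nat \<Rightarrow> (int \<Rightarrow> 'b) set \<Rightarrow> bool" where
  "periodic_subshift p X' \<longleftrightarrow> p > 0 \<and>
     (\<exists>y. (\<forall>n. y (n + int p) = y n) \<and> X' = {shiftZ j y | j. True})"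

definition Tpow :: "int \<Rightarrow> (int \<Rightarrow> 'a) \<times> (int \<Rightarrow> 'b) \<Rightarrow> (int \<Rightarrow> 'a) \<times> (int \<Rightarrow> 'b)" where
  "Tpow j \<omega> = (shiftZ j (fst \<omega>), shiftZ j (snd \<omega>))"

definition lang :: "(int \<Rightarrow> 'a) set \<Rightarrow> 'a list set" where
  "lang X = {w. \<exists>x\<in>X. \<exists>i. w = window x i (i + int (length w) - 1)}"

(* u^r for r = m/|u|: the prefix of length m of uuu... *)
definition word_pow :: "'a list \<Rightarrow> nat \<Rightarrow> 'a list" where
  "word_pow u m = take m (concat (replicate (m div length u + 1) u))"

definition ind :: "(int \<Rightarrow> 'a) set \<Rightarrow> 'a list \<Rightarrow> ereal" where
  "ind X u = Sup {ereal (real m / real (length u)) | m. word_pow u m \<in> lang X}"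

(* Borel sigma-algebra of the subspace X \<times> X' of the product of discrete spaces,
   generated by the coordinate cylinder sets *)
definition cyl_sigma :: "(int \<Rightarrow> 'a) set \<Rightarrow> (int \<Rightarrow> 'b) set \<Rightarrow> ((int \<Rightarrow> 'a) \<times> (int \<Rightarrow> 'b)) set set" where
  "cyl_sigma X X' = sigma_sets (X \<times> X')
     ({{\<omega> \<in> X \<times> X'. fst \<omega> i = a} | i a. True} \<union> {{\<omega> \<in> X \<times> X'. snd \<omega> i = b} | i b. True})"

definition measure_preserving_map :: "'c measure \<Rightarrow> ('c \<Rightarrow> 'c) \<Rightarrow> bool" where
  "measure_preserving_map M T \<longleftrightarrow> T \<in> M \<rightarrow>\<^sub>M M \<and>
     (\<forall>A\<in>sets M. emeasure M (T -` A \<inter> space M) = emeasure M A)"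

definition ergodic :: "'c measure \<Rightarrow> ('c \<Rightarrow> 'c) \<Rightarrow> bool" where
  "ergodic M T \<longleftrightarrow> prob_space M \<and> measure_preserving_map M T \<and>
     (\<forall>A\<in>sets M. T -` A \<inter> space M = A \<longrightarrow> emeasure M A = 0 \<or> emeasure M A = 1)"

definition has_eigenvalue :: "(int \<Rightarrow> real) \<Rightarrow> complex \<Rightarrow> bool" where
  "has_eigenvalue V E \<longleftrightarrow> (\<exists>\<psi> :: int \<Rightarrow> complex.
      (\<lambda>n. (cmod (\<psi> n))\<^sup>2) summable_on UNIV \<and> \<psi> \<noteq> (\<lambda>_. 0) \<and>
      (\<forall>n. \<psi> (n + 1) + \<psi> (n - 1) + complex_of_real (V n) * \<psi> n = E * \<psi> n))"

end

theory Submission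
  imports Defs
begin

text \<open>
  Gordon's argument: if the potential agrees with its translate by \<open>L\<close> on \<open>[j\<^sub>0 - L, j\<^sub>0 + L)\<close>,
  the one-period transfer matrix \<open>M\<close> (of determinant 1) carries the state of a solution at
  \<open>j\<^sub>0 - L\<close> to \<open>j\<^sub>0\<close>, \<open>j\<^sub>0 + L\<close> and \<open>j\<^sub>0 + 2L\<close>. Cayley-Hamilton, \<open>M\<^sup>2 = (tr M) M - 1\<close>, then bounds
  the state at \<open>j\<^sub>0\<close> by the sum of the other three, so a square-summable solution that sees
  such periodicity for arbitrarily large \<open>L\<close> vanishes at \<open>j\<^sub>0\<close> and \<open>j\<^sub>0 - 1\<close>, hence everywhere.

  The periodicity comes from the word \<open>u u u u\<^sub>1\<close> in the language. By primitivity its images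
  \<open>\<theta>\<^sup>n(u u u u\<^sub>1)\<close> occur in every window of length comparable to \<open>|\<theta>\<^sup>n u|\<close>, so every sequence of
  the subshift is \<open>|\<theta>\<^sup>n u|\<close>-periodic around one of boundedly many positions, the bound not
  depending on \<open>n\<close>. By shift invariance the set of points periodic around \<open>0\<close> has measure
  bounded below, and ergodicity makes ``periodic around some \<open>j\<close> for infinitely many \<open>n\<close> with
  \<open>p\<close> dividing \<open>|\<theta>\<^sup>n u|\<close>'' an almost sure event; the divisibility makes the \<open>p\<close>-periodic
  second coordinate invisible to these periods.
\<close>

definition has_period_on :: "nat \<Rightarrow> int set \<Rightarrow> (int \<Rightarrow> 'a) \<Rightarrow> bool" where
  "has_period_on L I x \<longleftrightarrow> (\<forall>i\<in>I. x (i + int L) = x i)"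

lemma has_period_on_subset: "has_period_on L I x \<Longrightarrow> J \<subseteq> I \<Longrightarrow> has_period_on L J x"
  unfolding has_period_on_def by blast

section \<open>Gordon's criterion\<close>

(* The hypotheses are what Cayley-Hamilton gives for the components of M\<^sup>k v, t = tr M, det M = 1. *)
lemma norm_le_neighbours:
  fixes t x\<^sub>0 x\<^sub>1 x\<^sub>2 x\<^sub>3 :: "'a::real_normed_div_algebra"
  assumes "x\<^sub>0 + x\<^sub>2 = t * x\<^sub>1" and "x\<^sub>1 + x\<^sub>3 = t * x\<^sub>2"
  shows "norm x\<^sub>1 \<le> norm x\<^sub>0 + norm x\<^sub>2 + norm x\<^sub>3"
proof (cases "norm t \<ge> 1")
  case True
  have "norm x\<^sub>1 \<le> norm t * norm x\<^sub>1"
    using True mult_right_mono[of 1 "norm t" "norm x\<^sub>1"] by simp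
  also have "\<dots> = norm (x\<^sub>0 + x\<^sub>2)" by (simp add: assms(1) norm_mult)
  also have "\<dots> \<le> norm x\<^sub>0 + norm x\<^sub>2" by (rule norm_triangle_ineq)
  finally show ?thesis using norm_ge_zero[of x\<^sub>3] by linarith
next
  case False
  have "norm x\<^sub>1 = norm (t * x\<^sub>2 - x\<^sub>3)" by (simp add: assms(2)[symmetric])
  also have "\<dots> \<le> norm t * norm x\<^sub>2 + norm x\<^sub>3"
    using norm_triangle_ineq4[of "t * x\<^sub>2" x\<^sub>3] by (simp add: norm_mult)
  also have "\<dots> \<le> norm x\<^sub>2 + norm x\<^sub>3"
    using False mult_right_mono[of "norm t" 1 "norm x\<^sub>2"] by simp
  finally show ?thesis using norm_ge_zero[of x\<^sub>0] by linarith
qed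

lemma matrix_vector_mult_2_cayley_hamilton:
  fixes A :: "'a::comm_ring_1^2^2"
  shows "A *v (A *v v) = trace A *s (A *v v) - det A *s v"
  by (simp add: vec_eq_iff forall_2 matrix_vector_mult_def sum_2 det_2 trace_def algebra_simps)

definition transfer_matrix :: "'a::comm_ring_1 \<Rightarrow> 'a^2^2" where
  "transfer_matrix w = vector [vector [w, -1], vector [1, 0]]"

fun transfer_prod :: "(int \<Rightarrow> 'a::comm_ring_1) \<Rightarrow> int \<Rightarrow> nat \<Rightarrow> 'a^2^2" where
  "transfer_prod W a 0 = mat 1"
| "transfer_prod W a (Suc l) = transfer_matrix (W (a + int l)) ** transfer_prod W a l"

definition solution_state :: "(int \<Rightarrow> 'a::zero) \<Rightarrow> int \<Rightarrow> 'a^2" where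
  "solution_state \<psi> a = vector [\<psi> a, \<psi> (a - 1)]"

lemma det_transfer_matrix: "det (transfer_matrix w) = 1"
  by (simp add: det_2 transfer_matrix_def)

lemma det_transfer_prod: "det (transfer_prod W a l) = 1"
  by (induction l) (simp_all add: det_mul det_transfer_matrix)

lemma transfer_prod_cong:
  assumes "\<And>i. i < l \<Longrightarrow> W (a + int i) = W' (a' + int i)"
  shows "transfer_prod W a l = transfer_prod W' a' l"
  using assms by (induction l) auto

lemma solution_state_transfer_prod:
  assumes "\<And>n. \<psi> (n + 1) = W n * \<psi> n - \<psi> (n - 1)"
  shows "solution_state \<psi> (a + int l) = transfer_prod W a l *v solution_state \<psi> a"
proof (induction l)
  case (Suc l)
  have "solution_state \<psi> (a + int l + 1) = transfer_matrix (W (a + int l)) *v solution_state \<psi> (a + int l)"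
    using assms[of "a + int l"]
    by (simp add: vec_eq_iff forall_2 matrix_vector_mult_def sum_2 transfer_matrix_def solution_state_def)
  then show ?case by (simp add: Suc.IH matrix_vector_mul_assoc ac_simps)
qed (simp add: matrix_vector_mul_lid)

lemma solution_eq_0_if_state_eq_0:
  fixes \<psi> W :: "int \<Rightarrow> 'a::field"
  assumes rec: "\<And>n. \<psi> (n + 1) = W n * \<psi> n - \<psi> (n - 1)" and zero: "solution_state \<psi> a = 0"
  shows "\<psi> = (\<lambda>_. 0)"
proof
  fix n
  have "solution_state \<psi> n = 0"
  proof (cases "a \<le> n")
    case True
    then have "n = a + int (nat (n - a))" by simp
    then show ?thesis using solution_state_transfer_prod[OF rec, of a "nat (n - a)"] zero by simp
  next
    case False
    then have "a = n + int (nat (a - n))" by simp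
    then have "transfer_prod W n (nat (a - n)) *v solution_state \<psi> n = 0"
      using solution_state_transfer_prod[OF rec, of n "nat (a - n)"] zero by simp
    moreover have "invertible (transfer_prod W n (nat (a - n)))"
      by (simp add: invertible_det_nz det_transfer_prod)
    ultimately show ?thesis
      using matrix_left_invertible_ker invertible_def by metis
  qed
  then show "\<psi> n = 0" by (simp add: solution_state_def vec_eq_iff forall_2)
qed

lemma norm_solution_state_le_translates:
  fixes \<psi> W :: "int \<Rightarrow> 'a::real_normed_field"
  assumes rec: "\<And>n. \<psi> (n + 1) = W n * \<psi> n - \<psi> (n - 1)"
    and per: "has_period_on L {j0 - int L ..< j0 + int L} W"
  shows "norm (solution_state \<psi> j0 $ i) \<le> norm (solution_state \<psi> (j0 - int L) $ i)
           + norm (solution_state \<psi> (j0 + int L) $ i) + norm (solution_state \<psi> (j0 + 2 * int L) $ i)"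
proof -
  define M where "M = transfer_prod W j0 L"
  have "W (j0 - int L + int l) = W (j0 + int l)" and "W (j0 + int L + int l) = W (j0 + int l)"
    if "l < L" for l
    using per that unfolding has_period_on_def
    by (auto dest: bspec[of _ _ "j0 - int L + int l"] bspec[of _ _ "j0 + int l"] simp: ac_simps)
  then have left: "transfer_prod W (j0 - int L) L = M" and right: "transfer_prod W (j0 + int L) L = M"
    unfolding M_def by (auto intro: transfer_prod_cong)
  define v\<^sub>0 v\<^sub>1 v\<^sub>2 v\<^sub>3 where "v\<^sub>0 = solution_state \<psi> (j0 - int L)" and "v\<^sub>1 = solution_state \<psi> j0"
    and "v\<^sub>2 = solution_state \<psi> (j0 + int L)" and "v\<^sub>3 = solution_state \<psi> (j0 + 2 * int L)"
  have "v\<^sub>1 = M *v v\<^sub>0" "v\<^sub>2 = M *v v\<^sub>1" "v\<^sub>3 = M *v v\<^sub>2"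
    using solution_state_transfer_prod[OF rec, of "j0 - int L" L] left
      solution_state_transfer_prod[OF rec, of j0 L] M_def
      solution_state_transfer_prod[OF rec, of "j0 + int L" L] right
    by (simp_all add: v\<^sub>0_def v\<^sub>1_def v\<^sub>2_def v\<^sub>3_def algebra_simps)
  then have "v\<^sub>0 + v\<^sub>2 = trace M *s v\<^sub>1" and "v\<^sub>1 + v\<^sub>3 = trace M *s v\<^sub>2"
    using matrix_vector_mult_2_cayley_hamilton[of M v\<^sub>0] matrix_vector_mult_2_cayley_hamilton[of M v\<^sub>1]
    by (simp_all add: M_def det_transfer_prod)
  then show ?thesis
    using norm_le_neighbours[of "v\<^sub>0 $ i" "v\<^sub>2 $ i" "trace M" "v\<^sub>1 $ i" "v\<^sub>3 $ i"]
    by (simp add: v\<^sub>0_def v\<^sub>1_def v\<^sub>2_def v\<^sub>3_def vec_eq_iff)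
qed

lemma finite_large_values_if_square_summable:
  fixes \<psi> :: "'i \<Rightarrow> 'a::real_normed_vector"
  assumes sq: "(\<lambda>n. (norm (\<psi> n))\<^sup>2) summable_on UNIV" and "\<epsilon> > 0"
  shows "finite {n. \<epsilon> \<le> norm (\<psi> n)}"
proof (rule ccontr)
  assume "infinite {n. \<epsilon> \<le> norm (\<psi> n)}"
  then obtain F where F: "F \<subseteq> {n. \<epsilon> \<le> norm (\<psi> n)}" "finite F"
    and card: "card F = nat \<lceil>infsum (\<lambda>n. (norm (\<psi> n))\<^sup>2) UNIV / \<epsilon>\<^sup>2\<rceil> + 1"
    using infinite_arbitrarily_large by meson
  have "\<epsilon>\<^sup>2 \<le> (norm (\<psi> n))\<^sup>2" if "n \<in> F" for n
    using F(1) that \<open>\<epsilon> > 0\<close> by (auto intro: power_mono)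
  then have "card F * \<epsilon>\<^sup>2 \<le> (\<Sum>n\<in>F. (norm (\<psi> n))\<^sup>2)"
    using sum_bounded_below[of F "\<epsilon>\<^sup>2"] by simp
  also have "\<dots> \<le> infsum (\<lambda>n. (norm (\<psi> n))\<^sup>2) UNIV"
    using F(2) by (intro finite_sum_le_infsum[OF sq]) auto
  finally have "card F \<le> infsum (\<lambda>n. (norm (\<psi> n))\<^sup>2) UNIV / \<epsilon>\<^sup>2"
    using \<open>\<epsilon> > 0\<close> by (simp add: field_simps)
  then show False using card by linarith
qed

theorem gordon_no_eigenvalue:
  assumes "\<exists>\<^sub>\<infinity>L. has_period_on L {j0 - int L ..< j0 + int L} V"
  shows "\<not> has_eigenvalue V E"
proof
  assume "has_eigenvalue V E"
  then obtain \<psi> where sq: "(\<lambda>n. (cmod (\<psi> n))\<^sup>2) summable_on UNIV" and "\<psi> \<noteq> (\<lambda>_. 0)"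
    and eq: "\<And>n. \<psi> (n + 1) + \<psi> (n - 1) + complex_of_real (V n) * \<psi> n = E * \<psi> n"
    unfolding has_eigenvalue_def by blast
  define W where "W n = E - complex_of_real (V n)" for n
  have rec: "\<psi> (n + 1) = W n * \<psi> n - \<psi> (n - 1)" for n
    using eq[of n] by (simp add: W_def algebra_simps eq_diff_eq)
  have "cmod (solution_state \<psi> j0 $ i) = 0" for i
  proof (rule ccontr)
    define \<delta> where "\<delta> = cmod (solution_state \<psi> j0 $ i)"
    assume "cmod (solution_state \<psi> j0 $ i) \<noteq> 0"
    then have "\<delta> > 0" by (simp add: \<delta>_def)
    then have "finite {n. \<delta> / 3 \<le> cmod (\<psi> n)}"
      by (intro finite_large_values_if_square_summable[OF sq]) simp
    then obtain k where k: "\<And>n. \<delta> / 3 \<le> cmod (\<psi> n) \<Longrightarrow> \<bar>n\<bar> < k"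
      unfolding finite_int_iff_bounded by blast
    have small: "cmod (solution_state \<psi> a $ i) < \<delta> / 3" if "k + 1 \<le> \<bar>a\<bar>" for a
      using k[of a] k[of "a - 1"] that exhaust_2[of i] by (force simp: solution_state_def)
    obtain L where "nat (k + \<bar>j0\<bar> + 1) \<le> L" and "has_period_on L {j0 - int L ..< j0 + int L} V"
      using assms unfolding INFM_nat_le by blast
    moreover from this have "has_period_on L {j0 - int L ..< j0 + int L} W"
      by (simp add: has_period_on_def W_def)
    ultimately have "cmod (solution_state \<psi> j0 $ i) < \<delta>"
      using norm_solution_state_le_translates[OF rec, of L j0 i]
        small[of "j0 - int L"] small[of "j0 + int L"] small[of "j0 + 2 * int L"]
      by force
    then show False by (simp add: \<delta>_def)
  qed
  then have "solution_state \<psi> j0 = 0" by (simp add: vec_eq_iff)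
  then show False using solution_eq_0_if_state_eq_0[OF rec] \<open>\<psi> \<noteq> (\<lambda>_. 0)\<close> by blast
qed

section \<open>Words, windows and local periods\<close>

lemma length_window [simp]: "length (window x i j) = nat (j - i + 1)"
  by (simp add: window_def)

lemma nth_window [simp]: "k < nat (j - i + 1) \<Longrightarrow> window x i j ! k = x (i + int k)"
  by (simp add: window_def)

lemma shiftZ_shiftZ: "shiftZ j (shiftZ k x) = shiftZ (j + k) x"
  by (simp add: shiftZ_def fun_eq_iff ac_simps)

lemma window_shiftZ: "window (shiftZ d x) i j = window x (i + d) (j + d)"
  by (rule nth_equalityI) (simp_all add: shiftZ_def ac_simps)

lemma has_period_on_shiftZ: "has_period_on L I (shiftZ d x) \<longleftrightarrow> has_period_on L ((\<lambda>i. i + d) ` I) x"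
  by (simp add: has_period_on_def shiftZ_def ac_simps)

lemma window_eq_if_has_period_on:
  assumes "has_period_on L {a .. b} x" and "a \<le> i" and "i + int k - 1 \<le> b"
  shows "window x (i + int L) (i + int L + int k - 1) = window x i (i + int k - 1)"
proof (rule nth_equalityI)
  fix d assume "d < length (window x (i + int L) (i + int L + int k - 1))"
  then have "x (i + int d + int L) = x (i + int d)"
    using assms unfolding has_period_on_def by auto
  then show "window x (i + int L) (i + int L + int k - 1) ! d = window x i (i + int k - 1) ! d"
    using \<open>d < _\<close> by (simp add: ac_simps)
qed simp

lemma sublist_window_obtain_position:
  assumes "sublist w (window x s (s + int l - 1))"
  obtains t where "s \<le> t" and "t + int (length w) \<le> s + int l"
    and "window x t (t + int (length w) - 1) = w"
proof -
  obtain p q where pq: "window x s (s + int l - 1) = p @ w @ q" using assms unfolding sublist_def by blast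
  define t where "t = s + int (length p)"
  have len: "length p + length w \<le> l"
    using arg_cong[OF pq, of length] by simp
  have "window x t (t + int (length w) - 1) = w"
  proof (rule nth_equalityI)
    fix k assume "k < length (window x t (t + int (length w) - 1))"
    then have k: "k < length w" by simp
    have "x (t + int k) = window x s (s + int l - 1) ! (length p + k)"
      using len k by (simp add: t_def add.assoc)
    then show "window x t (t + int (length w) - 1) ! k = w ! k"
      using k by (simp add: pq nth_append)
  qed simp
  moreover have "t + int (length w) \<le> s + int l" using len by (simp add: t_def)
  ultimately show thesis using that[of t] by (simp add: t_def)
qed

lemma has_period_on_if_window_eq_overlap:
  assumes occ: "window x t (t + int (length (v @ w)) - 1) = v @ w" and "prefix w (v @ w)"
  shows "has_period_on (length v) {t ..< t + int (length w)} x"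
  unfolding has_period_on_def
proof
  fix i assume "i \<in> {t ..< t + int (length w)}"
  then obtain d where i: "i = t + int d" and d: "d < length w"
    by (intro that[of "nat (i - t)"]) auto
  have x: "x (t + int k) = (v @ w) ! k" if "k < length (v @ w)" for k
  proof -
    have "x (t + int k) = window x t (t + int (length (v @ w)) - 1) ! k"
      using that by simp
    then show ?thesis by (simp only: occ)
  qed
  obtain zs where "v @ w = w @ zs" using \<open>prefix w (v @ w)\<close> unfolding prefix_def by blast
  then have "(v @ w) ! d = w ! d" using d by (simp add: nth_append)
  moreover have "x (i + int (length v)) = w ! d"
    using x[of "length v + d"] d by (simp add: i ac_simps nth_append)
  ultimately show "x (i + int (length v)) = x i" using x[of d] d by (simp add: i)
qed

lemma sublist_concat_contains_block:
  assumes "\<And>b. b \<in> set bs \<Longrightarrow> length b \<le> D" and "1 \<le> D"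
    and "concat bs = p @ v @ s" and "2 * D \<le> length v"
  shows "\<exists>b\<in>set bs. sublist b v"
  using assms(1,3)
proof (induction bs arbitrary: p)
  case Nil
  then show ?case using assms(2,4) by simp
next
  case (Cons b bs)
  have eq: "b @ concat bs = p @ v @ s" using Cons.prems(2) by simp
  show ?case
  proof (cases "length b \<le> length p")
    case True
    with eq obtain p' where "p = b @ p'" and "concat bs = p' @ v @ s"
      by (auto simp: append_eq_append_conv2)
    then show ?thesis using Cons.IH[of p'] Cons.prems(1) by auto
  next
    case False
    with eq obtain b' where b': "b = p @ b'" and "b' @ concat bs = v @ s"
      by (auto simp: append_eq_append_conv2)
    moreover have "length b' < length v" using b' Cons.prems(1)[of b] assms(2,4) by auto
    ultimately obtain r where r: "v = b' @ r" and "concat bs = r @ s"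
      by (auto simp: append_eq_append_conv2)
    have "D \<le> length r" using r b' Cons.prems(1)[of b] assms(4) by auto
    show ?thesis
    proof (cases bs)
      case Nil
      then show ?thesis using \<open>D \<le> length r\<close> \<open>concat bs = r @ s\<close> assms(2) by simp
    next
      case (Cons c cs)
      have "length c \<le> length r" using \<open>D \<le> length r\<close> Cons.prems(1) Cons by force
      moreover have "c @ concat cs = r @ s" using \<open>concat bs = r @ s\<close> Cons by simp
      ultimately obtain r' where "r = c @ r'" by (auto simp: append_eq_append_conv2)
      then show ?thesis using r Cons by (auto simp: sublist_def)
    qed
  qed
qed

lemma exists_multiple_in_interval:
  assumes "0 < h"
  obtains r :: nat where "a \<le> r * h" and "r * h < a + h"
proof
  show "a \<le> (a + h - 1) div h * h" and "(a + h - 1) div h * h < a + h"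
    using div_mult_mod_eq[of "a + h - 1" h] mod_less_divisor[OF assms, of "a + h - 1"] assms
    by linarith+
qed

(* The margin B accommodates the window on which a locally constant potential depends. *)
definition has_period_around :: "nat \<Rightarrow> nat \<Rightarrow> int \<Rightarrow> (int \<Rightarrow> 'a) \<Rightarrow> bool" where
  "has_period_around L B j x \<longleftrightarrow> has_period_on L {j - int L - int B .. j + int L + int B} x"

lemma has_period_around_centred_at_multiple:
  fixes t :: int
  assumes per: "has_period_on L {t ..< t + 2 * int L + int h + 2 * int B} x" and "0 \<le> t" and "0 < h"
  obtains r :: nat where "r * h < nat t + L + B + h" and "has_period_around L B (int (r * h)) x"
proof -
  obtain r where r: "nat t + L + B \<le> r * h" "r * h < nat t + L + B + h"
    using exists_multiple_in_interval[OF \<open>0 < h\<close>] by blast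
  then have "t + int L + int B \<le> int (r * h)" and "int (r * h) < t + int L + int B + int h"
    using \<open>0 \<le> t\<close> by linarith+
  then have "{int (r * h) - int L - int B .. int (r * h) + int L + int B}
      \<subseteq> {t ..< t + 2 * int L + int h + 2 * int B}"
    by auto
  then show thesis
    using that r(2) has_period_on_subset[OF per] unfolding has_period_around_def by blast
qed

section \<open>Substitution subshifts\<close>

lemma subst_pow_0 [simp]: "subst_pow \<theta> 0 w = w"
  by (simp add: subst_pow_def)

lemma subst_pow_Suc: "subst_pow \<theta> (Suc n) w = subst_word \<theta> (subst_pow \<theta> n w)"
  by (simp add: subst_pow_def)

lemma subst_pow_add: "subst_pow \<theta> (m + n) w = subst_pow \<theta> m (subst_pow \<theta> n w)"
  by (simp add: subst_pow_def funpow_add)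

lemma subst_pow_append [simp]: "subst_pow \<theta> n (v @ w) = subst_pow \<theta> n v @ subst_pow \<theta> n w"
  by (induction n) (simp_all add: subst_pow_Suc subst_word_def)

lemma subst_pow_Nil [simp]: "subst_pow \<theta> n [] = []"
  by (induction n) (simp_all add: subst_pow_Suc subst_word_def)

lemma subst_pow_eq_concat: "subst_pow \<theta> n w = concat (map (\<lambda>a. subst_pow \<theta> n [a]) w)"
proof (induction w)
  case (Cons a w)
  have "subst_pow \<theta> n (a # w) = subst_pow \<theta> n [a] @ subst_pow \<theta> n w"
    using subst_pow_append[of \<theta> n "[a]" w] by simp
  then show ?case using Cons by simp
qed simp

lemma length_subst_pow: "length (subst_pow \<theta> n w) = (\<Sum>a\<leftarrow>w. length (subst_pow \<theta> n [a]))"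
  by (subst subst_pow_eq_concat) (simp add: length_concat comp_def)

lemma sublist_subst_pow: "sublist v w \<Longrightarrow> sublist (subst_pow \<theta> n v) (subst_pow \<theta> n w)"
  unfolding sublist_def by (metis subst_pow_append)

lemma length_subst_word_ge:
  assumes "is_substitution \<theta>"
  shows "length w \<le> length (subst_word \<theta> w)"
proof (induction w)
  case (Cons a w)
  have "0 < length (\<theta> a)" using assms by (simp add: is_substitution_def)
  moreover have "length (subst_word \<theta> (a # w)) = length (\<theta> a) + length (subst_word \<theta> w)"
    by (simp add: subst_word_def)
  ultimately show ?case using Cons by (simp del: length_greater_0_conv)
qed (simp add: subst_word_def)

lemma length_subst_pow_mono:
  assumes "is_substitution \<theta>" and "m \<le> n"
  shows "length (subst_pow \<theta> m w) \<le> length (subst_pow \<theta> n w)"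
  using assms(2)
proof (induction n)
  case (Suc n)
  then show ?case
    using length_subst_word_ge[OF assms(1), of "subst_pow \<theta> n w"]
    by (cases "m = Suc n") (auto simp: subst_pow_Suc)
qed simp

lemma length_subst_pow_letter_pos: "is_substitution \<theta> \<Longrightarrow> 1 \<le> length (subst_pow \<theta> n [a])"
  using length_subst_pow_mono[of \<theta> 0 n "[a]"] by simp

lemma sum_list_le_length_mult:
  fixes f :: "'x \<Rightarrow> nat"
  assumes "\<And>x. x \<in> set xs \<Longrightarrow> f x \<le> B"
  shows "(\<Sum>x\<leftarrow>xs. f x) \<le> length xs * B"
  using sum_list_mono[of xs f "\<lambda>_. B"] assms by (simp add: sum_list_triv)

lemma length_subst_pow_le:
  assumes "\<And>a. length (subst_pow \<theta> n [a]) \<le> K * length (subst_pow \<theta> n [b])"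
  shows "length (subst_pow \<theta> n w) \<le> length w * (K * length (subst_pow \<theta> n [b]))"
  unfolding length_subst_pow[of _ _ w] by (rule sum_list_le_length_mult) (rule assms)

lemma sublist_subst_pow_if_letter_occurs:
  assumes "b \<in> set (subst_pow \<theta> N [a])"
  shows "sublist (subst_pow \<theta> m [b]) (subst_pow \<theta> (m + N) [a])"
proof -
  from assms obtain v w where "subst_pow \<theta> N [a] = v @ b # w" by (meson split_list)
  then have "sublist [b] (subst_pow \<theta> N [a])" by (simp add: sublist_def) blast
  then show ?thesis unfolding subst_pow_add by (rule sublist_subst_pow)
qed

lemma primitive_length_ratio:
  fixes \<theta> :: "'a::finite \<Rightarrow> 'a list"
  assumes subst: "is_substitution \<theta>" and prim: "primitive_subst \<theta>"
  obtains K where "\<And>a b n. length (subst_pow \<theta> n [a]) \<le> K * length (subst_pow \<theta> n [b])"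
proof -
  obtain N where N: "\<And>a b. b \<in> set (subst_pow \<theta> N [a])"
    using prim unfolding primitive_subst_def by blast
  define K where "K = (\<Sum>c\<in>UNIV. length (subst_pow \<theta> N [c]))"
  have K: "length (subst_pow \<theta> N [c]) \<le> K" for c
    unfolding K_def by (rule member_le_sum) auto
  have "length (subst_pow \<theta> n [a]) \<le> K * length (subst_pow \<theta> n [b])" for a b n
  proof (cases "N \<le> n")
    case True
    then obtain m where n: "n = m + N" using le_Suc_ex by (metis add.commute)
    have "length (subst_pow \<theta> n [a]) = (\<Sum>e\<leftarrow>subst_pow \<theta> N [a]. length (subst_pow \<theta> m [e]))"
      by (simp add: n subst_pow_add length_subst_pow[of _ _ "subst_pow \<theta> N [a]"])
    also have "\<dots> \<le> length (subst_pow \<theta> N [a]) * length (subst_pow \<theta> n [b])"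
      using sublist_length_le[OF sublist_subst_pow_if_letter_occurs[OF N]]
      by (intro sum_list_le_length_mult) (simp add: n)
    also have "\<dots> \<le> K * length (subst_pow \<theta> n [b])" using K by simp
    finally show ?thesis .
  next
    case False
    have "length (subst_pow \<theta> n [a]) \<le> length (subst_pow \<theta> N [a])"
      using length_subst_pow_mono[OF subst, of n N] False by simp
    also have "\<dots> \<le> K" by (rule K)
    also have "\<dots> \<le> K * length (subst_pow \<theta> n [b])"
      using length_subst_pow_letter_pos[OF subst] by simp
    finally show ?thesis .
  qed
  then show thesis by (rule that)
qed

lemma primitive_sublist_subst_pow_all_letters:
  assumes prim: "primitive_subst \<theta>" and "sublist w (subst_pow \<theta> m [a])"
  obtains M where "\<And>b. sublist w (subst_pow \<theta> M [b])"
proof -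
  obtain N where "\<And>a b. b \<in> set (subst_pow \<theta> N [a])"
    using prim unfolding primitive_subst_def by blast
  then have "sublist (subst_pow \<theta> m [a]) (subst_pow \<theta> (m + N) [b])" for b
    by (rule sublist_subst_pow_if_letter_occurs)
  then show thesis using that assms(2) sublist_order.order.trans by metis
qed

lemma sublist_subst_pow_if_in_lang:
  assumes "w \<in> lang (subst_subshift \<theta>)"
  obtains m a where "sublist w (subst_pow \<theta> m [a])"
proof -
  from assms obtain x i where "x \<in> subst_subshift \<theta>" and w: "w = window x i (i + int (length w) - 1)"
    unfolding lang_def by blast
  then obtain m a where "sublist (window x i (i + int (length w) - 1)) (subst_pow \<theta> m [a])"
    unfolding subst_subshift_def by blast
  then show thesis using that w by metis
qed

lemma shiftZ_in_subst_subshift: "x \<in> subst_subshift \<theta> \<Longrightarrow> shiftZ d x \<in> subst_subshift \<theta>"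
  by (simp add: subst_subshift_def window_shiftZ)

(* Nonemptiness of the subshift is needed: for the primitive substitution a \<mapsto> a the subshift is empty. *)
lemma length_subst_pow_letter_tendsto:
  fixes \<theta> :: "'a::finite \<Rightarrow> 'a list"
  assumes subst: "is_substitution \<theta>" and prim: "primitive_subst \<theta>"
    and x: "x \<in> subst_subshift \<theta>"
  shows "filterlim (\<lambda>n. length (subst_pow \<theta> n [b])) at_top sequentially"
  unfolding filterlim_at_top
proof
  obtain K where K: "\<And>a b n. length (subst_pow \<theta> n [a]) \<le> K * length (subst_pow \<theta> n [b])"
    using primitive_length_ratio[OF subst prim] by metis
  fix C :: nat
  obtain m a where "sublist (window x 0 (int (K * C))) (subst_pow \<theta> m [a])"
    using x unfolding subst_subshift_def by blast
  from sublist_length_le[OF this] have "K * C < length (subst_pow \<theta> m [a])"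
    by (simp add: nat_add_distrib nat_mult_distrib)
  also have "\<dots> \<le> K * length (subst_pow \<theta> m [b])" by (rule K)
  finally have "C \<le> length (subst_pow \<theta> m [b])" by simp
  then have "C \<le> length (subst_pow \<theta> n [b])" if "m \<le> n" for n
    using length_subst_pow_mono[OF subst that] by (rule le_trans)
  then show "\<forall>\<^sub>F n in sequentially. C \<le> length (subst_pow \<theta> n [b])"
    unfolding eventually_sequentially by blast
qed

lemma length_subst_pow_tendsto:
  fixes \<theta> :: "'a::finite \<Rightarrow> 'a list"
  assumes subst: "is_substitution \<theta>" and prim: "primitive_subst \<theta>"
    and "x \<in> subst_subshift \<theta>" and "u \<noteq> []"
  shows "filterlim (\<lambda>n. length (subst_pow \<theta> n u)) at_top sequentially"
proof (rule filterlim_at_top_mono[OF length_subst_pow_letter_tendsto[OF assms(1-3), of "hd u"]])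
  have "subst_pow \<theta> n u = subst_pow \<theta> n [hd u] @ subst_pow \<theta> n (tl u)" for n
    using subst_pow_append[of \<theta> n "[hd u]" "tl u"] \<open>u \<noteq> []\<close> by simp
  then show "\<forall>\<^sub>F n in sequentially. length (subst_pow \<theta> n [hd u]) \<le> length (subst_pow \<theta> n u)"
    by simp
qed

lemma length_word_pow:
  assumes "u \<noteq> []"
  shows "length (word_pow u m) = m"
proof -
  have "m < (m div length u + 1) * length u"
    using assms by (simp add: dividend_less_div_times)
  then show ?thesis by (simp add: word_pow_def length_concat sum_list_replicate)
qed

lemma prefix_word_pow:
  assumes "u \<noteq> []" and "3 * length u < m"
  shows "prefix (u @ u @ u @ [hd u]) (word_pow u m)"
proof -
  define q where "q = m div length u + 1"
  have "3 * length u div length u \<le> m div length u" using assms(2) by (intro div_le_mono) simp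
  then have "4 \<le> q" using assms(1) by (simp add: q_def)
  then have "replicate q u = replicate 4 u @ replicate (q - 4) u"
    by (simp flip: replicate_add)
  then have "concat (replicate q u) = u @ u @ u @ u @ concat (replicate (q - 4) u)"
    by (simp add: numeral_eq_Suc)
  then have "prefix (u @ u @ u @ [hd u]) (concat (replicate q u))"
    using assms(1) by (cases u) auto
  moreover have "length (u @ u @ u @ [hd u]) \<le> length (word_pow u m)"
    using assms by (simp add: length_word_pow)
  ultimately show ?thesis
    unfolding word_pow_def q_def by (rule prefix_length_prefix[OF _ take_is_prefix])
qed

lemma ind_gt_3_imp_sublist_subst_pow:
  assumes "3 < ind (subst_subshift \<theta>) u"
  obtains m a where "u \<noteq> []" and "sublist (u @ u @ u @ [hd u]) (subst_pow \<theta> m [a])"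
proof -
  obtain m where m: "word_pow u m \<in> lang (subst_subshift \<theta>)" and "3 < ereal (real m / real (length u))"
    using assms unfolding ind_def less_Sup_iff by blast
  moreover have "u \<noteq> []" using calculation by (cases u) auto \<comment> \<open>for \<open>u = []\<close> all ratios are \<open>m / 0 = 0\<close>\<close>
  ultimately have "real (3 * length u) < real m" by (simp add: field_simps)
  then have "prefix (u @ u @ u @ [hd u]) (word_pow u m)"
    using prefix_word_pow[OF \<open>u \<noteq> []\<close>] of_nat_less_iff by blast
  moreover obtain m' a where "sublist (word_pow u m) (subst_pow \<theta> m' [a])"
    using sublist_subst_pow_if_in_lang[OF m] .
  ultimately have "sublist (u @ u @ u @ [hd u]) (subst_pow \<theta> m' [a])"
    using prefix_imp_sublist sublist_order.order.trans by blast
  then show thesis using that \<open>u \<noteq> []\<close> by blast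
qed

lemma subst_subshift_window_contains_subst_pow:
  assumes subst: "is_substitution \<theta>" and x: "x \<in> subst_subshift \<theta>"
    and w: "\<And>b. sublist w (subst_pow \<theta> M [b])"
    and D: "\<And>b. length (subst_pow \<theta> (n + M) [b]) \<le> D" "1 \<le> D"
  shows "sublist (subst_pow \<theta> n w) (window x s (s + int (2 * D) - 1))"
proof -
  let ?v = "window x s (s + int (2 * D) - 1)"
  obtain m a where sub: "sublist ?v (subst_pow \<theta> m [a])"
    using x unfolding subst_subshift_def by blast
  have "n + M \<le> m"
  proof (rule ccontr)
    assume "\<not> n + M \<le> m"
    then have "length (subst_pow \<theta> m [a]) \<le> D"
      using length_subst_pow_mono[OF subst, of m "n + M" "[a]"] D(1)[of a] by simp
    then show False using sublist_length_le[OF sub] D(2) by simp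
  qed
  then obtain r where "m = (n + M) + r" using le_Suc_ex by blast
  then have "subst_pow \<theta> m [a] = concat (map (\<lambda>c. subst_pow \<theta> (n + M) [c]) (subst_pow \<theta> r [a]))"
    by (simp add: subst_pow_add subst_pow_eq_concat[of _ _ "subst_pow \<theta> r [a]"])
  with sub obtain p q where split: "concat (map (\<lambda>c. subst_pow \<theta> (n + M) [c]) (subst_pow \<theta> r [a])) = p @ ?v @ q"
    unfolding sublist_def by auto
  have "\<exists>b\<in>set (map (\<lambda>c. subst_pow \<theta> (n + M) [c]) (subst_pow \<theta> r [a])). sublist b ?v"
    by (rule sublist_concat_contains_block[OF _ D(2) split]) (auto simp: D(1))
  then obtain c where c: "sublist (subst_pow \<theta> (n + M) [c]) ?v" by auto
  have "sublist (subst_pow \<theta> n w) (subst_pow \<theta> (n + M) [c])"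
    unfolding subst_pow_add by (rule sublist_subst_pow[OF w])
  then show ?thesis using c by (rule sublist_order.order.trans)
qed

lemma subst_subshift_has_period_on_stretch:
  assumes subst: "is_substitution \<theta>" and x: "x \<in> subst_subshift \<theta>" and "u \<noteq> []"
    and occ: "\<And>b. sublist (u @ u @ u @ [hd u]) (subst_pow \<theta> M [b])"
    and D: "\<And>b. length (subst_pow \<theta> (n + M) [b]) \<le> D" "1 \<le> D"
  obtains t where "0 \<le> t" and "t \<le> int (2 * D)"
    and "has_period_on (length (subst_pow \<theta> n u))
           {t ..< t + 2 * int (length (subst_pow \<theta> n u)) + int (length (subst_pow \<theta> n [hd u]))} x"
proof -
  define V Y where "V = subst_pow \<theta> n u" and "Y = subst_pow \<theta> n [hd u]"
  have "V = Y @ subst_pow \<theta> n (tl u)"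
    using subst_pow_append[of \<theta> n "[hd u]" "tl u"] \<open>u \<noteq> []\<close> by (simp add: V_def Y_def)
  then have overlap: "prefix (V @ V @ Y) (V @ V @ V @ Y)" by simp
  have "sublist (V @ V @ V @ Y) (window x 0 (0 + int (2 * D) - 1))"
    using subst_subshift_window_contains_subst_pow[OF subst x occ D, of 0] by (simp add: V_def Y_def)
  then obtain t where "0 \<le> t" and "t + int (length (V @ V @ V @ Y)) \<le> 0 + int (2 * D)"
    and "window x t (t + int (length (V @ V @ V @ Y)) - 1) = V @ V @ V @ Y"
    by (rule sublist_window_obtain_position)
  moreover from this have "has_period_on (length V) {t ..< t + int (length (V @ V @ Y))} x"
    using has_period_on_if_window_eq_overlap[of x t V "V @ V @ Y"] overlap by simp
  ultimately show thesis using that[of t] by (simp add: V_def Y_def add.assoc)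
qed

lemma subst_subshift_has_period_around_multiple:
  assumes subst: "is_substitution \<theta>" and x: "x \<in> subst_subshift \<theta>" and "u \<noteq> []"
    and occ: "\<And>b. sublist (u @ u @ u @ [hd u]) (subst_pow \<theta> M [b])"
    and D: "\<And>b. length (subst_pow \<theta> (n + M) [b]) \<le> D" "1 \<le> D"
    and e: "length (subst_pow \<theta> n [hd u]) = h + 2 * B" and "0 < h"
  obtains r :: nat where "r * h < 2 * D + length (subst_pow \<theta> n u) + B + h"
    and "has_period_around (length (subst_pow \<theta> n u)) B (int (r * h)) x"
proof -
  let ?L = "length (subst_pow \<theta> n u)"
  obtain t where t: "0 \<le> t" "t \<le> int (2 * D)"
    and "has_period_on ?L {t ..< t + 2 * int ?L + int (h + 2 * B)} x"
    by (rule subst_subshift_has_period_on_stretch[OF subst x \<open>u \<noteq> []\<close> occ D, unfolded e])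
  then have "has_period_on ?L {t ..< t + 2 * int ?L + int h + 2 * int B} x" by (simp add: add.assoc)
  then obtain r where "r * h < nat t + ?L + B + h" and "has_period_around ?L B (int (r * h)) x"
    using has_period_around_centred_at_multiple t(1) \<open>0 < h\<close> by blast
  moreover have "nat t \<le> 2 * D" using t(2) by (simp add: nat_le_iff)
  ultimately show thesis using that[of r] by linarith
qed

lemma subst_subshift_has_period_around_bounded_multiple:
  assumes subst: "is_substitution \<theta>" and x: "x \<in> subst_subshift \<theta>" and "u \<noteq> []"
    and occ: "\<And>b. sublist (u @ u @ u @ [hd u]) (subst_pow \<theta> M [b])"
    and K: "\<And>a b. length (subst_pow \<theta> n [a]) \<le> K * length (subst_pow \<theta> n [b])"
    and C: "\<And>b. length (subst_pow \<theta> M [b]) \<le> C"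
    and e: "4 * B + 2 \<le> length (subst_pow \<theta> n [hd u])"
  obtains r where "r < 2 * (2 * C * K + length u * K) + 2"
    and "has_period_around (length (subst_pow \<theta> n u)) B
           (int (r * (length (subst_pow \<theta> n [hd u]) - 2 * B))) x"
proof -
  define L e h P where "L = length (subst_pow \<theta> n u)" and "e = length (subst_pow \<theta> n [hd u])"
    and "h = e - 2 * B" and "P = 2 * C * K + length u * K"
  have D: "length (subst_pow \<theta> (n + M) [b]) \<le> C * K * e" for b
  proof -
    have "length (subst_pow \<theta> (n + M) [b]) \<le> length (subst_pow \<theta> M [b]) * (K * e)"
      unfolding subst_pow_add e_def by (rule length_subst_pow_le) (rule K)
    also have "\<dots> \<le> C * (K * e)" using C by (rule mult_right_mono) simp
    finally show ?thesis by (simp add: mult.assoc)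
  qed
  moreover have "1 \<le> C * K * e"
    using D[of undefined] length_subst_pow_letter_pos[OF subst, of "n + M" undefined] by linarith
  moreover have "e = h + 2 * B" and "0 < h" using e by (simp_all add: h_def e_def)
  ultimately obtain r where r: "r * h < 2 * (C * K * e) + L + B + h"
    and per: "has_period_around L B (int (r * h)) x"
    using subst_subshift_has_period_around_multiple[OF subst x \<open>u \<noteq> []\<close> occ]
    unfolding L_def e_def by blast
  have "L \<le> length u * (K * e)" unfolding L_def e_def by (rule length_subst_pow_le) (rule K)
  moreover have "P * e = 2 * (C * K * e) + length u * (K * e)" by (simp add: P_def algebra_simps)
  moreover have "e \<le> 2 * h" and "B \<le> h" using e by (simp_all add: h_def e_def)
  moreover from this have "P * e \<le> P * (2 * h)" by simp
  moreover have "(2 * P + 2) * h = P * (2 * h) + 2 * h" by (simp add: algebra_simps)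
  ultimately have "r * h < (2 * P + 2) * h" using r by linarith
  then have "r < 2 * P + 2" by (simp only: mult_less_cancel2)
  then show thesis using that per by (simp add: P_def L_def h_def e_def)
qed

lemma subst_subshift_uniformly_locally_periodic:
  fixes \<theta> :: "'a::finite \<Rightarrow> 'a list" and B :: nat
  assumes subst: "is_substitution \<theta>" and prim: "primitive_subst \<theta>"
    and u_lang: "u \<in> lang (subst_subshift \<theta>)" and u_ind: "3 < ind (subst_subshift \<theta>) u"
  obtains R where "\<forall>\<^sub>F n in sequentially. \<exists>J. finite J \<and> card J \<le> R \<and>
    (\<forall>x\<in>subst_subshift \<theta>. \<exists>j\<in>J. has_period_around (length (subst_pow \<theta> n u)) B j x)"
proof -
  obtain m a where "u \<noteq> []" and "sublist (u @ u @ u @ [hd u]) (subst_pow \<theta> m [a])"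
    using ind_gt_3_imp_sublist_subst_pow[OF u_ind] .
  then obtain M where occ: "\<And>b. sublist (u @ u @ u @ [hd u]) (subst_pow \<theta> M [b])"
    using primitive_sublist_subst_pow_all_letters[OF prim] by blast
  obtain K where K: "\<And>a b n. length (subst_pow \<theta> n [a]) \<le> K * length (subst_pow \<theta> n [b])"
    using primitive_length_ratio[OF subst prim] by metis
  obtain x0 where "x0 \<in> subst_subshift \<theta>" using u_lang unfolding lang_def by blast
  from length_subst_pow_letter_tendsto[OF subst prim this]
  have "\<forall>\<^sub>F n in sequentially. 4 * B + 2 \<le> length (subst_pow \<theta> n [hd u])"
    by (rule filterlim_at_top[THEN iffD1, rule_format])
  define C where "C = (\<Sum>c\<in>UNIV. length (subst_pow \<theta> M [c]))"
  have C: "length (subst_pow \<theta> M [b]) \<le> C" for b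
    unfolding C_def by (rule member_le_sum) simp_all
  define R where "R = 2 * (2 * C * K + length u * K) + 2"
  show thesis
  proof (rule that[of R], rule eventually_mono[OF \<open>\<forall>\<^sub>F n in sequentially. _\<close>])
    fix n assume e: "4 * B + 2 \<le> length (subst_pow \<theta> n [hd u])"
    define J where "J = (\<lambda>r. int (r * (length (subst_pow \<theta> n [hd u]) - 2 * B))) ` {..<R}"
    have "\<exists>j\<in>J. has_period_around (length (subst_pow \<theta> n u)) B j x" if x: "x \<in> subst_subshift \<theta>" for x
      using subst_subshift_has_period_around_bounded_multiple[OF subst x \<open>u \<noteq> []\<close> occ K C e]
      unfolding J_def R_def by blast
    moreover have "card J \<le> R" unfolding J_def by (rule card_image_le[THEN order_trans]) simp_all
    ultimately show "\<exists>J. finite J \<and> card J \<le> R \<and>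
        (\<forall>x\<in>subst_subshift \<theta>. \<exists>j\<in>J. has_period_around (length (subst_pow \<theta> n u)) B j x)"
      unfolding J_def by blast
  qed
qed

lemma periodic_subshift_shiftZ_closed:
  assumes "periodic_subshift p X'" and "x' \<in> X'"
  shows "shiftZ d x' \<in> X'"
  using assms unfolding periodic_subshift_def by (auto simp: shiftZ_shiftZ)

lemma periodic_subshift_shiftZ_period:
  assumes "periodic_subshift p X'" and "x' \<in> X'" and "p dvd L"
  shows "shiftZ (int L) x' = x'"
proof -
  obtain y j where y: "\<And>n. y (n + int p) = y n" and x': "x' = shiftZ j y"
    using assms(1,2) unfolding periodic_subshift_def by blast
  have "y (n + int (p * q)) = y n" for n q
  proof (induction q)
    case (Suc q)
    then show ?case using y[of "n + int (p * q)"] by (simp add: algebra_simps)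
  qed simp
  then show ?thesis
    using assms(3) by (auto simp: x' shiftZ_def fun_eq_iff elim!: dvdE) (metis add.assoc add.commute)
qed

section \<open>The ergodic argument\<close>

lemma measure_preserving_covariant_measure_eq:
  fixes A :: "int \<Rightarrow> 'a set"
  assumes "measure_preserving_map M T" and "\<And>j. A j \<in> sets M"
    and cov: "\<And>j. T -` A j \<inter> space M = A (j + 1)"
  shows "measure M (A j) = measure M (A 0)"
proof -
  have step: "measure M (A (i + 1)) = measure M (A i)" for i
    using assms(1,2) cov[of i] unfolding measure_preserving_map_def measure_def by metis
  show ?thesis
  proof (induction j rule: int_induct[where k = 0])
    case (step2 i)
    then show ?case using step[of "i - 1"] by simp
  qed (simp_all add: step)
qed

lemma measure_covariant_cover_ge:
  fixes A :: "int \<Rightarrow> 'a set"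
  assumes "prob_space M" "measure_preserving_map M T" and "\<And>j. A j \<in> sets M"
    and "\<And>j. T -` A j \<inter> space M = A (j + 1)"
    and "finite J" and cover: "space M \<subseteq> (\<Union>j\<in>J. A j)"
  shows "1 \<le> card J * measure M (A 0)"
proof -
  interpret prob_space M by fact
  have "1 = measure M (space M)" by (simp add: prob_space)
  also have "\<dots> \<le> measure M (\<Union>j\<in>J. A j)"
    using cover assms(3,5) by (intro finite_measure_mono) auto
  also have "\<dots> \<le> (\<Sum>j\<in>J. measure M (A j))"
    using assms(3,5) by (intro finite_measure_subadditive_finite) auto
  also have "\<dots> = (\<Sum>j\<in>J. measure M (A 0))"
    using measure_preserving_covariant_measure_eq[of M T A, OF assms(2-4)] by (intro sum.cong) auto
  also have "\<dots> = card J * measure M (A 0)" by simp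
  finally show ?thesis .
qed

lemma (in finite_measure) measure_limsup_ge:
  fixes A :: "nat \<Rightarrow> 'a set"
  assumes sets: "\<And>n. A n \<in> sets M" and "\<exists>\<^sub>\<infinity>n. c \<le> measure M (A n)"
  shows "c \<le> measure M (\<Inter>m. \<Union>n\<in>{m..}. A n)"
proof (rule LIMSEQ_le_const[OF finite_Lim_measure_decseq[of "\<lambda>m. \<Union>n\<in>{m..}. A n"]])
  have tail: "(\<Union>n\<in>{m..}. A n) \<in> sets M" for m
    using sets by (intro sets.countable_UN) auto
  then show "range (\<lambda>m. \<Union>n\<in>{m..}. A n) \<subseteq> sets M" by blast
  show "decseq (\<lambda>m. \<Union>n\<in>{m..}. A n)"
    unfolding decseq_def by (intro allI impI UN_mono) simp_all
  show "\<exists>N. \<forall>m\<ge>N. c \<le> measure M (\<Union>n\<in>{m..}. A n)"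
  proof (intro exI allI impI)
    fix m
    obtain n where "m \<le> n" and "c \<le> measure M (A n)"
      using assms(2) unfolding INFM_nat_le by blast
    moreover have "measure M (A n) \<le> measure M (\<Union>n\<in>{m..}. A n)"
      using \<open>m \<le> n\<close> tail by (intro finite_measure_mono) auto
    ultimately show "c \<le> measure M (\<Union>n\<in>{m..}. A n)" by linarith
  qed
qed

lemma ergodic_AE_in_invariant:
  assumes "ergodic M T" and "G \<in> sets M" and "T -` G \<inter> space M = G" and "0 < measure M G"
  shows "AE \<omega> in M. \<omega> \<in> G"
proof -
  interpret prob_space M using assms(1) by (simp add: ergodic_def)
  have "emeasure M G = 0 \<or> emeasure M G = 1" using assms(1-3) unfolding ergodic_def by blast
  then have "measure M G = 1" using assms(4) by (auto simp: measure_def)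
  then show ?thesis using AE_in_set_eq_1[OF assms(2)] by simp
qed

lemma ergodic_AE_exists_frequently:
  fixes A :: "int \<Rightarrow> nat \<Rightarrow> 'a set"
  assumes erg: "ergodic M T" and sets: "\<And>j n. A j n \<in> sets M"
    and cov: "\<And>j n. T -` A j n \<inter> space M = A (j + 1) n"
    and "0 < c" and "\<exists>\<^sub>\<infinity>n. c \<le> measure M (A 0 n)"
  shows "AE \<omega> in M. \<exists>j. \<exists>\<^sub>\<infinity>n. \<omega> \<in> A j n"
proof -
  interpret prob_space M using erg by (simp add: ergodic_def)
  define G where "G j = (\<Inter>m. \<Union>n\<in>{m..}. A j n)" for j
  have G: "\<omega> \<in> G j \<longleftrightarrow> (\<exists>\<^sub>\<infinity>n. \<omega> \<in> A j n)" for \<omega> j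
    unfolding G_def INFM_nat_le by auto
  have "G j \<in> sets M" for j
    unfolding G_def using sets by (intro sets.countable_INT sets.countable_UN) auto
  then have meas: "(\<Union>j. G j) \<in> sets M" by (intro sets.countable_UN) auto
  have "T -` G j \<inter> space M = (\<Inter>m. \<Union>n\<in>{m..}. T -` A j n \<inter> space M)" for j
    unfolding G_def by blast
  then have pre: "T -` G j \<inter> space M = G (j + 1)" for j by (simp add: cov G_def)
  have "T -` (\<Union>j. G j) \<inter> space M = (\<Union>j. T -` G j \<inter> space M)" by blast
  also have "\<dots> = (\<Union>j. G (j + 1))" by (simp only: pre)
  also have "\<dots> = (\<Union>j. G j)"
  proof (intro equalityI subsetI)
    fix \<omega> assume "\<omega> \<in> (\<Union>j. G j)"
    then obtain j where "\<omega> \<in> G j" by blast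
    then show "\<omega> \<in> (\<Union>j. G (j + 1))" by (intro UN_I[of "j - 1"]) simp_all
  qed blast
  finally have "T -` (\<Union>j. G j) \<inter> space M = (\<Union>j. G j)" .
  moreover have "c \<le> measure M (G 0)"
    unfolding G_def by (rule measure_limsup_ge[OF sets assms(5)])
  moreover have "measure M (G 0) \<le> measure M (\<Union>j. G j)"
    using meas by (intro finite_measure_mono) auto
  ultimately have "AE \<omega> in M. \<omega> \<in> (\<Union>j. G j)"
    using \<open>0 < c\<close> by (intro ergodic_AE_in_invariant[OF erg meas]) simp_all
  then show ?thesis by (simp add: G)
qed

lemma frequently_at_top_if_frequently_comp:
  fixes f :: "nat \<Rightarrow> nat"
  assumes "filterlim f at_top sequentially" and "\<exists>\<^sub>\<infinity>n. Q (f n)"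
  shows "\<exists>\<^sub>\<infinity>m. Q m"
  unfolding INFM_nat_le
proof
  fix N
  have "\<forall>\<^sub>F n in sequentially. N \<le> f n"
    using assms(1) by (rule filterlim_at_top[THEN iffD1, rule_format])
  with assms(2) have "\<exists>\<^sub>F n in sequentially. Q (f n) \<and> N \<le> f n"
    unfolding cofinite_eq_sequentially by (rule frequently_eventually_frequently)
  then show "\<exists>m\<ge>N. Q m" by (auto dest: frequently_ex)
qed

lemma sets_has_period_on:
  fixes M :: "((int \<Rightarrow> 'a::finite) \<times> (int \<Rightarrow> 'b)) measure"
  assumes space: "space M = X \<times> X'" and sets: "sets M = cyl_sigma X X'" and "finite I"
  shows "{\<omega> \<in> space M. has_period_on L I (fst \<omega>)} \<in> sets M"
proof -
  have cyl: "{\<omega> \<in> space M. fst \<omega> i = a} \<in> sets M" for i a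
    unfolding space sets cyl_sigma_def by (rule sigma_sets.Basic) blast
  have "{\<omega> \<in> space M. fst \<omega> i' = fst \<omega> i} \<in> sets M" for i i'
  proof -
    have "{\<omega> \<in> space M. fst \<omega> i' = fst \<omega> i} = {\<omega> \<in> space M. \<exists>a\<in>UNIV. fst \<omega> i = a \<and> fst \<omega> i' = a}"
      by auto
    also have "\<dots> \<in> sets M"
      by (intro sets.sets_Collect_finite_Ex sets.sets_Collect_conj cyl) simp
    finally show ?thesis .
  qed
  then show ?thesis
    unfolding has_period_on_def using \<open>finite I\<close> by (intro sets.sets_Collect_finite_All) auto
qed

lemma vimage_Tpow_1_has_period_around:
  assumes "Tpow 1 \<in> M \<rightarrow>\<^sub>M M"
  shows "Tpow 1 -` {\<omega> \<in> space M. has_period_around L B j (fst \<omega>)} \<inter> space M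
       = {\<omega> \<in> space M. has_period_around L B (j + 1) (fst \<omega>)}"
  using measurable_space[OF assms]
  by (auto simp: Tpow_def has_period_around_def has_period_on_shiftZ algebra_simps)

lemma measure_has_period_around_ge:
  fixes M :: "((int \<Rightarrow> 'a::finite) \<times> (int \<Rightarrow> 'b)) measure"
  assumes "prob_space M" and mp: "measure_preserving_map M (Tpow 1)"
    and space: "space M = X \<times> X'" and sets: "sets M = cyl_sigma X X'"
    and "finite J" and "card J \<le> R" and cover: "\<forall>x\<in>X. \<exists>j\<in>J. has_period_around L B j x"
  shows "1 \<le> R * measure M {\<omega> \<in> space M. has_period_around L B 0 (fst \<omega>)}"
proof -
  define P where "P j = {\<omega> \<in> space M. has_period_around L B j (fst \<omega>)}" for j
  have "P j \<in> sets M" for j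
    unfolding P_def has_period_around_def by (rule sets_has_period_on[OF space sets]) simp
  moreover have "Tpow 1 -` P j \<inter> space M = P (j + 1)" for j
    using mp unfolding P_def measure_preserving_map_def by (intro vimage_Tpow_1_has_period_around) simp
  moreover have "space M \<subseteq> (\<Union>j\<in>J. P j)"
    using cover by (force simp: P_def space)
  ultimately have "1 \<le> card J * measure M (P 0)"
    by (rule measure_covariant_cover_ge[OF \<open>prob_space M\<close> mp _ _ \<open>finite J\<close>])
  also have "\<dots> \<le> R * measure M (P 0)" using \<open>card J \<le> R\<close> by (intro mult_right_mono) simp_all
  finally show ?thesis by (simp only: P_def)
qed

lemma AE_exists_frequently_has_period_around:
  fixes \<theta> :: "'a::finite \<Rightarrow> 'a list" and \<rho> :: "((int \<Rightarrow> 'a) \<times> (int \<Rightarrow> 'b)) measure"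
  assumes subst: "is_substitution \<theta>" and prim: "primitive_subst \<theta>"
    and space_rho: "space \<rho> = subst_subshift \<theta> \<times> X'"
    and sets_rho: "sets \<rho> = cyl_sigma (subst_subshift \<theta>) X'"
    and erg: "ergodic \<rho> (Tpow 1)"
    and u_lang: "u \<in> lang (subst_subshift \<theta>)" and u_ind: "3 < ind (subst_subshift \<theta>) u"
    and u_div: "infinite {m. p dvd length (subst_pow \<theta> m u)}"
  shows "AE \<omega> in \<rho>. \<exists>j. \<exists>\<^sub>\<infinity>L. p dvd L \<and> has_period_around L B j (fst \<omega>)"
proof -
  have "prob_space \<rho>" and mp: "measure_preserving_map \<rho> (Tpow 1)"
    using erg by (simp_all add: ergodic_def)
  define L where "L n = length (subst_pow \<theta> n u)" for n
  define A where "A j n = (if p dvd L n then {\<omega> \<in> space \<rho>. has_period_around (L n) B j (fst \<omega>)} else {})"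
    for j n
  have A_sets: "A j n \<in> sets \<rho>" for j n
    by (simp add: A_def has_period_around_def sets_has_period_on[OF space_rho sets_rho])
  have "Tpow 1 \<in> \<rho> \<rightarrow>\<^sub>M \<rho>" using mp by (simp add: measure_preserving_map_def)
  from vimage_Tpow_1_has_period_around[OF this]
  have A_cov: "Tpow 1 -` A j n \<inter> space \<rho> = A (j + 1) n" for j n by (simp add: A_def)
  obtain R where "\<forall>\<^sub>F n in sequentially. \<exists>J. finite J \<and> card J \<le> R \<and>
      (\<forall>x\<in>subst_subshift \<theta>. \<exists>j\<in>J. has_period_around (L n) B j x)"
    using subst_subshift_uniformly_locally_periodic[OF subst prim u_lang u_ind] unfolding L_def by blast
  then have "\<forall>\<^sub>F n in sequentially. 1 \<le> R * measure \<rho> {\<omega> \<in> space \<rho>. has_period_around (L n) B 0 (fst \<omega>)}"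
    by (elim eventually_mono exE conjE) (rule measure_has_period_around_ge[OF \<open>prob_space \<rho>\<close> mp space_rho sets_rho])
  moreover have "\<exists>\<^sub>\<infinity>n. p dvd L n" using u_div by (simp add: L_def INFM_iff_infinite)
  ultimately have freq: "\<exists>\<^sub>\<infinity>n. 1 / (real R + 1) \<le> measure \<rho> (A 0 n)"
    unfolding cofinite_eq_sequentially
    by (elim frequently_eventually_frequently[THEN frequently_elim1])
      (auto simp: A_def field_simps intro: add_increasing)
  have "AE \<omega> in \<rho>. \<exists>j. \<exists>\<^sub>\<infinity>n. \<omega> \<in> A j n"
    by (rule ergodic_AE_exists_frequently[where A = A, OF erg A_sets A_cov _ freq]) simp
  moreover have "filterlim L at_top sequentially"
  proof -
    obtain m a where "u \<noteq> []" and "sublist (u @ u @ u @ [hd u]) (subst_pow \<theta> m [a])"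
      using ind_gt_3_imp_sublist_subst_pow[OF u_ind] .
    moreover obtain x0 where "x0 \<in> subst_subshift \<theta>" using u_lang unfolding lang_def by blast
    ultimately show ?thesis unfolding L_def by (intro length_subst_pow_tendsto[OF subst prim])
  qed
  ultimately show ?thesis
  proof (elim eventually_mono exE)
    fix \<omega> j assume "filterlim L at_top sequentially" and "\<exists>\<^sub>\<infinity>n. \<omega> \<in> A j n"
    then have "\<exists>\<^sub>\<infinity>n. p dvd L n \<and> has_period_around (L n) B j (fst \<omega>)"
      by (elim frequently_elim1) (simp add: A_def split: if_splits)
    then show "\<exists>j. \<exists>\<^sub>\<infinity>L. p dvd L \<and> has_period_around L B j (fst \<omega>)"
      using frequently_at_top_if_frequently_comp[OF \<open>filterlim L at_top sequentially\<close>,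
          where Q = "\<lambda>L. p dvd L \<and> has_period_around L B j (fst \<omega>)"]
      by blast
  qed
qed

lemma locally_constant_potential_has_period_on:
  fixes f :: "(int \<Rightarrow> 'a) \<times> (int \<Rightarrow> 'b) \<Rightarrow> real"
  assumes per: "periodic_subshift p X'"
    and f: "\<And>x x'. x \<in> X \<Longrightarrow> x' \<in> X' \<Longrightarrow> f (x, x') = g (window x c (c + int k - 1)) x'"
    and x: "\<And>d. shiftZ d x \<in> X" and x': "x' \<in> X'" and "p dvd L" and "nat \<bar>c\<bar> + k \<le> B"
    and period: "has_period_around L B j0 x"
  shows "has_period_on L {j0 - int L ..< j0 + int L} (\<lambda>j. f (Tpow j (x, x')))"
  unfolding has_period_on_def
proof
  fix j assume "j \<in> {j0 - int L ..< j0 + int L}"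
  then have "window x (c + j + int L) (c + j + int L + int k - 1) = window x (c + j) (c + j + int k - 1)"
    using \<open>nat \<bar>c\<bar> + k \<le> B\<close> by (intro window_eq_if_has_period_on[OF period[unfolded has_period_around_def]]) auto
  then have "window (shiftZ (j + int L) x) c (c + int k - 1) = window (shiftZ j x) c (c + int k - 1)"
    by (simp add: window_shiftZ algebra_simps)
  moreover have "shiftZ (j + int L) x' = shiftZ j x'"
    using periodic_subshift_shiftZ_period[OF per x' \<open>p dvd L\<close>] by (metis shiftZ_shiftZ)
  ultimately show "f (Tpow (j + int L) (x, x')) = f (Tpow j (x, x'))"
    using x periodic_subshift_shiftZ_closed[OF per x'] by (simp add: Tpow_def f)
qed

theorem proposition3p41:
  fixes \<theta> :: "'a::finite \<Rightarrow> 'a list"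
    and X' :: "(int \<Rightarrow> 'b::finite) set"
    and p :: nat
    and \<rho> :: "((int \<Rightarrow> 'a) \<times> (int \<Rightarrow> 'b)) measure"
    and f :: "(int \<Rightarrow> 'a) \<times> (int \<Rightarrow> 'b) \<Rightarrow> real"
    and u :: "'a list"
  assumes subst: "is_substitution \<theta>"
    and prim: "primitive_subst \<theta>"
    and per: "periodic_subshift p X'"
    and space_rho: "space \<rho> = subst_subshift \<theta> \<times> X'"
    and sets_rho: "sets \<rho> = cyl_sigma (subst_subshift \<theta>) X'"
    and erg: "ergodic \<rho> (Tpow 1)"
    and loc: "\<exists>n k g. \<forall>x\<in>subst_subshift \<theta>. \<forall>x'\<in>X'.
                f (x, x') = g (window x n (n + int k - 1)) x'"
    and u_lang: "u \<in> lang (subst_subshift \<theta>)"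
    and u_ind: "ind (subst_subshift \<theta>) u > 3"
    and u_div: "infinite {m. p dvd length (subst_pow \<theta> m u)}"
  shows "AE \<omega> in \<rho>. \<not> (\<exists>E. has_eigenvalue (\<lambda>j. f (Tpow j \<omega>)) E)"
proof -
  obtain c k g where f: "\<And>x x'. x \<in> subst_subshift \<theta> \<Longrightarrow> x' \<in> X' \<Longrightarrow>
      f (x, x') = g (window x c (c + int k - 1)) x'"
    using loc by blast
  define B where "B = nat \<bar>c\<bar> + k"
  have "AE \<omega> in \<rho>. \<exists>j. \<exists>\<^sub>\<infinity>L. p dvd L \<and> has_period_around L B j (fst \<omega>)"
    by (rule AE_exists_frequently_has_period_around[OF subst prim space_rho sets_rho erg u_lang u_ind u_div])
  with AE_space show ?thesis
  proof (eventually_elim, elim exE)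
    fix \<omega> j assume "\<omega> \<in> space \<rho>"
      and "\<exists>\<^sub>\<infinity>L. p dvd L \<and> has_period_around L B j (fst \<omega>)"
    then have "\<exists>\<^sub>\<infinity>L. has_period_on L {j - int L ..< j + int L} (\<lambda>i. f (Tpow i \<omega>))"
      by (elim frequently_elim1)
        (auto simp: space_rho B_def shiftZ_in_subst_subshift
              intro!: locally_constant_potential_has_period_on[where f = f and g = g, OF per f])
    then show "\<not> (\<exists>E. has_eigenvalue (\<lambda>i. f (Tpow i \<omega>)) E)"
      using gordon_no_eigenvalue by blast
  qed
qed

end
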